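(* Let $(\mathfrak g,B,S,E)$ be a quadratic ENL-RB algebra of weight $\lambda\neq0$. Then $(\mathfrak g,\mathfrak g^*_{r^{B,S}},E)$ is an ENL bialgebra; that is, $(\mathfrak g,\mathfrak g^*_{r^{B,S}})$ is a Lie bialgebra, $E$ is an equivariant Nijenhuis operator on $\mathfrak g$ and $E^*$ is an equivariant Nijenhuis operator on the Lie algebra $\mathfrak g^*_{r^{B,S}}$, i.e. $E^*[\xi,\eta]_{r^{B,S}}=[E^*\xi,\eta]_{r^{B,S}}$ for all $\xi,\eta\in\mathfrak g^*$.
   Context: All vector spaces are finite-dimensional over an algebraically closed field of characteristic zero. A Rota–Baxter operator of weight $\lambda$ on a Lie algebra $\mathfrak g$ is linear $B$ with $[Bx,By]=B([Bx,y]+[x,By]+\lambda[x,y])$. A quadratic Rota–Baxter Lie algebra $(\mathfrak g,B,S)$ of weight $\lambda$ is such a $B$ together with a nondegenerate symmetric invariant ($S([x,y],z)+S(y,[x,z])=0$) bilinear form $S$ with $S(x,By)+S(Bx,y)+\lambda S(x,y)=0$. A quadratic ENL-RB algebra $(\mathfrak g,B,S,E)$ is a quadratic Rota–Baxter Lie algebra $(\mathfrak g,B,S)$ of weight $\lambda\neq0$ with a linear $E:\mathfrak g\to\mathfrak g$ such that $E[x,y]=[x,Ey]$ for all $x,y$, $S(Ex,y)=S(x,Ey)$, and $E\circ B=B\circ E$. Let $\mathcal I_S:\mathfrak g^*\to\mathfrak g$ be defined by $\langle\mathcal I_S^{-1}x,y\rangle=S(x,y)$, and let $r^{B,S}\in\mathfrak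 g\otimes\mathfrak g$ be the tensor with $r_+:=r^{B,S}(\xi,\cdot)=\frac1\lambda(B+\lambda\mathrm{Id})\circ\mathcal I_S(\xi)$; set $r_-:=-r_+^*$. The Lie algebra $\mathfrak g^*_{r^{B,S}}$ is $\mathfrak g^*$ with bracket $[\xi,\eta]_{r^{B,S}}=\mathrm{ad}^*_{r_+\xi}\eta-\mathrm{ad}^*_{r_-\eta}\xi$, where $\langle\mathrm{ad}^*_x\xi,y\rangle=-\langle\xi,[x,y]\rangle$. A Lie bialgebra $(\mathfrak g,\mathfrak g^* )$ means Lie brackets on $\mathfrak g$ and $\mathfrak g^*$ such that the map $\Delta:\mathfrak g\to\mathfrak g\otimes\mathfrak g$ dual to the bracket on $\mathfrak g^*$ is a 1-cocycle: $\Delta([x,y])=(\mathrm{ad}_x\otimes\mathrm{Id}+\mathrm{Id}\otimes\mathrm{ad}_x)\Delta(y)-(\mathrm{ad}_y\otimes\mathrm{Id}+\mathrm{Id}\otimes\mathrm{ad}_y)\Delta(x)$. An ENL bialgebra $(\mathfrak g,\mathfrak g^*,E)$ is a Lie bialgebra such that $E[x,y]=[x,Ey]$ on $\mathfrak g$ and $E^*[\xi,\eta]=[\xi,E^*\eta]$ on $\mathfrak g^*$. *)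

theory Defs
  imports Main "HOL-Computational_Algebra.Polynomial"
begin

definition alg_closed_field :: "'k::field_char_0 itself \<Rightarrow> bool" where
  "alg_closed_field _ \<longleftrightarrow> (\<forall>p :: 'k poly. degree p > 0 \<longrightarrow> (\<exists>x. poly p x = 0))"

definition fd_space :: "('k::field \<Rightarrow> 'v::ab_group_add \<Rightarrow> 'v) \<Rightarrow> bool" where
  "fd_space sc \<longleftrightarrow> (\<exists>Bs. finite_dimensional_vector_space sc Bs)"

definition dual_sp :: "('k::field \<Rightarrow> 'v::ab_group_add \<Rightarrow> 'v) \<Rightarrow> ('v \<Rightarrow> 'k) set" where
  "dual_sp sc = {\<xi>. Vector_Spaces.linear sc (*) \<xi>}"

definition lie_algebra :: "('k::field \<Rightarrow> 'v::ab_group_add \<Rightarrow> 'v) \<Rightarrow> ('v \<Rightarrow> 'v \<Rightarrow> 'v) \<Rightarrow> bool" where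
  "lie_algebra sc br \<longleftrightarrow> vector_space sc
     \<and> (\<forall>x. Vector_Spaces.linear sc sc (br x))
     \<and> (\<forall>y. Vector_Spaces.linear sc sc (\<lambda>x. br x y))
     \<and> (\<forall>x y. br x y = - br y x)
     \<and> (\<forall>x y z. br x (br y z) + br y (br z x) + br z (br x y) = 0)"

definition dual_lie_algebra :: "('k::field \<Rightarrow> 'v::ab_group_add \<Rightarrow> 'v) \<Rightarrow>
     (('v \<Rightarrow> 'k) \<Rightarrow> ('v \<Rightarrow> 'k) \<Rightarrow> ('v \<Rightarrow> 'k)) \<Rightarrow> bool" where
  "dual_lie_algebra sc dbr \<longleftrightarrow>
     (\<forall>\<xi>\<in>dual_sp sc. \<forall>\<eta>\<in>dual_sp sc. dbr \<xi> \<eta> \<in> dual_sp sc)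
   \<and> (\<forall>a b \<xi> \<xi>' \<eta>. \<xi> \<in> dual_sp sc \<longrightarrow> \<xi>' \<in> dual_sp sc \<longrightarrow> \<eta> \<in> dual_sp sc \<longrightarrow>
        dbr (\<lambda>v. a * \<xi> v + b * \<xi>' v) \<eta> = (\<lambda>v. a * dbr \<xi> \<eta> v + b * dbr \<xi>' \<eta> v))
   \<and> (\<forall>a b \<xi> \<eta> \<eta>'. \<xi> \<in> dual_sp sc \<longrightarrow> \<eta> \<in> dual_sp sc \<longrightarrow> \<eta>' \<in> dual_sp sc \<longrightarrow>
        dbr \<xi> (\<lambda>v. a * \<eta> v + b * \<eta>' v) = (\<lambda>v. a * dbr \<xi> \<eta> v + b * dbr \<xi> \<eta>' v))
   \<and> (\<forall>\<xi>\<in>dual_sp sc. \<forall>\<eta>\<in>dual_sp sc. dbr \<xi> \<eta> = (\<lambda>v. - dbr \<eta> \<xi> v))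
   \<and> (\<forall>\<xi>\<in>dual_sp sc. \<forall>\<eta>\<in>dual_sp sc. \<forall>\<zeta>\<in>dual_sp sc.
        (\<lambda>v. dbr \<xi> (dbr \<eta> \<zeta>) v + dbr \<eta> (dbr \<zeta> \<xi>) v + dbr \<zeta> (dbr \<xi> \<eta>) v) = (\<lambda>v. 0))"

text \<open>The cobracket Delta : g -> g (x) g is dual to dbr, i.e.
  <Delta x, xi (x) eta> = <dbr xi eta, x>.  Since g (x) g is identified with bilinear forms
  on g^* (finite dimension), the 1-cocycle condition is stated by pairing both sides with
  xi (x) eta; note <(ad_x (x) Id) t, xi (x) eta> = <t, (xi o ad_x) (x) eta>.\<close>
definition lie_bialgebra :: "('k::field \<Rightarrow> 'v::ab_group_add \<Rightarrow> 'v) \<Rightarrow> ('v \<Rightarrow> 'v \<Rightarrow> 'v) \<Rightarrow>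
     (('v \<Rightarrow> 'k) \<Rightarrow> ('v \<Rightarrow> 'k) \<Rightarrow> ('v \<Rightarrow> 'k)) \<Rightarrow> bool" where
  "lie_bialgebra sc br dbr \<longleftrightarrow> lie_algebra sc br \<and> dual_lie_algebra sc dbr
   \<and> (\<forall>x y. \<forall>\<xi>\<in>dual_sp sc. \<forall>\<eta>\<in>dual_sp sc.
        dbr \<xi> \<eta> (br x y) =
          dbr (\<lambda>z. \<xi> (br x z)) \<eta> y + dbr \<xi> (\<lambda>z. \<eta> (br x z)) y
        - dbr (\<lambda>z. \<xi> (br y z)) \<eta> x - dbr \<xi> (\<lambda>z. \<eta> (br y z)) x)"

text \<open>ENL bialgebra; the dual map E^* acts by E^* xi = xi o E.\<close>
definition enl_bialgebra :: "('k::field \<Rightarrow> 'v::ab_group_add \<Rightarrow> 'v) \<Rightarrow> ('v \<Rightarrow> 'v \<Rightarrow> 'v) \<Rightarrow>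
     (('v \<Rightarrow> 'k) \<Rightarrow> ('v \<Rightarrow> 'k) \<Rightarrow> ('v \<Rightarrow> 'k)) \<Rightarrow> ('v \<Rightarrow> 'v) \<Rightarrow> bool" where
  "enl_bialgebra sc br dbr E \<longleftrightarrow> lie_bialgebra sc br dbr
   \<and> Vector_Spaces.linear sc sc E
   \<and> (\<forall>x y. E (br x y) = br x (E y))
   \<and> (\<forall>\<xi>\<in>dual_sp sc. \<forall>\<eta>\<in>dual_sp sc. dbr \<xi> \<eta> \<circ> E = dbr \<xi> (\<eta> \<circ> E))"

definition quadratic_RB_lie :: "('k::field \<Rightarrow> 'v::ab_group_add \<Rightarrow> 'v) \<Rightarrow> ('v \<Rightarrow> 'v \<Rightarrow> 'v) \<Rightarrow>
     ('v \<Rightarrow> 'v) \<Rightarrow> ('v \<Rightarrow> 'v \<Rightarrow> 'k) \<Rightarrow> 'k \<Rightarrow> bool" where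
  "quadratic_RB_lie sc br B S lam \<longleftrightarrow> lie_algebra sc br
   \<and> Vector_Spaces.linear sc sc B
   \<and> (\<forall>x y. br (B x) (B y) = B (br (B x) y + br x (B y) + sc lam (br x y)))
   \<and> (\<forall>x. Vector_Spaces.linear sc (*) (S x))
   \<and> (\<forall>y. Vector_Spaces.linear sc (*) (\<lambda>x. S x y))
   \<and> (\<forall>x y. S x y = S y x)
   \<and> (\<forall>x. (\<forall>y. S x y = 0) \<longrightarrow> x = 0)
   \<and> (\<forall>x y z. S (br x y) z + S y (br x z) = 0)
   \<and> (\<forall>x y. S x (B y) + S (B x) y + lam * S x y = 0)"

definition quadratic_ENL_RB :: "('k::field \<Rightarrow> 'v::ab_group_add \<Rightarrow> 'v) \<Rightarrow> ('v \<Rightarrow> 'v \<Rightarrow> 'v) \<Rightarrow>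
     ('v \<Rightarrow> 'v) \<Rightarrow> ('v \<Rightarrow> 'v \<Rightarrow> 'k) \<Rightarrow> ('v \<Rightarrow> 'v) \<Rightarrow> 'k \<Rightarrow> bool" where
  "quadratic_ENL_RB sc br B S E lam \<longleftrightarrow> quadratic_RB_lie sc br B S lam \<and> lam \<noteq> 0
   \<and> Vector_Spaces.linear sc sc E
   \<and> (\<forall>x y. E (br x y) = br x (E y))
   \<and> (\<forall>x y. S (E x) y = S x (E y))
   \<and> E \<circ> B = B \<circ> E"

definition I_S :: "('v \<Rightarrow> 'v \<Rightarrow> 'k) \<Rightarrow> ('v \<Rightarrow> 'k) \<Rightarrow> 'v" where
  "I_S S \<xi> = (THE x. \<forall>y. S x y = \<xi> y)"

definition r_plus :: "('k::field \<Rightarrow> 'v::ab_group_add \<Rightarrow> 'v) \<Rightarrow> ('v \<Rightarrow> 'v) \<Rightarrow>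
     ('v \<Rightarrow> 'v \<Rightarrow> 'k) \<Rightarrow> 'k \<Rightarrow> ('v \<Rightarrow> 'k) \<Rightarrow> 'v" where
  "r_plus sc B S lam \<xi> = sc (1 / lam) (B (I_S S \<xi>) + sc lam (I_S S \<xi>))"

text \<open>r_- = - r_+^*, with g^** identified with g: <zeta, r_- eta> = - <eta, r_+ zeta>.\<close>
definition r_minus :: "('k::field \<Rightarrow> 'v::ab_group_add \<Rightarrow> 'v) \<Rightarrow> ('v \<Rightarrow> 'v) \<Rightarrow>
     ('v \<Rightarrow> 'v \<Rightarrow> 'k) \<Rightarrow> 'k \<Rightarrow> ('v \<Rightarrow> 'k) \<Rightarrow> 'v" where
  "r_minus sc B S lam \<eta> = (THE x. \<forall>\<zeta>\<in>dual_sp sc. \<zeta> x = - \<eta> (r_plus sc B S lam \<zeta>))"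

definition ad_star :: "('v \<Rightarrow> 'v \<Rightarrow> 'v) \<Rightarrow> 'v \<Rightarrow> ('v \<Rightarrow> 'k::ab_group_add) \<Rightarrow> ('v \<Rightarrow> 'k)" where
  "ad_star br x \<xi> = (\<lambda>y. - \<xi> (br x y))"

definition r_bracket :: "('k::field \<Rightarrow> 'v::ab_group_add \<Rightarrow> 'v) \<Rightarrow> ('v \<Rightarrow> 'v \<Rightarrow> 'v) \<Rightarrow> ('v \<Rightarrow> 'v) \<Rightarrow>
     ('v \<Rightarrow> 'v \<Rightarrow> 'k) \<Rightarrow> 'k \<Rightarrow> ('v \<Rightarrow> 'k) \<Rightarrow> ('v \<Rightarrow> 'k) \<Rightarrow> ('v \<Rightarrow> 'k)" where
  "r_bracket sc br B S lam \<xi> \<eta> =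
     (\<lambda>y. ad_star br (r_plus sc B S lam \<xi>) \<eta> y - ad_star br (r_minus sc B S lam \<eta>) \<xi> y)"

end

theory Submission
  imports Defs
begin

text \<open>By finite dimension and nondegeneracy, \<open>a \<mapsto> S a\<close> is an isomorphism of \<open>g\<close> onto
  \<open>g\<^sup>*\<close>, and everything is transported along it. The maps \<open>r\<^sub>\<plusminus>\<close> become
  \<open>(B + \<lambda>)/\<lambda>\<close> and \<open>B/\<lambda>\<close>, which are adjoint up to sign because
  \<open>S(x, By) + S(Bx, y) + \<lambda>S(x, y) = 0\<close>,
  and the bracket of \<open>g\<^sup>*\<^sub>r\<close> becomes \<open>1/\<lambda>\<close> times the descendent bracket
  \<open>[x, y]\<^sub>B = [Bx, y] + [x, By] + \<lambda>[x, y]\<close>. The Rota-Baxter identity says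
  \<open>B[x, y]\<^sub>B = [Bx, By]\<close>, which splits the Jacobi identity of \<open>[-,-]\<^sub>B\<close> into Jacobi identities
  of \<open>g\<close>; by invariance of \<open>S\<close> the cocycle condition also reduces to the Jacobi identity of \<open>g\<close>.
  Finally \<open>E\<close> commutes with \<open>B\<close> and with brackets in either argument, hence with \<open>[-,-]\<^sub>B\<close>,
  and it is self-adjoint for \<open>S\<close>, so its transpose is equivariant for the transported bracket.\<close>

locale nondegenerate_form = finite_dimensional_vector_space sc Bs
  for sc :: "'k::field \<Rightarrow> 'v::ab_group_add \<Rightarrow> 'v" and Bs :: "'v set" +
  fixes S :: "'v \<Rightarrow> 'v \<Rightarrow> 'k"
  assumes linear_S_right: "Vector_Spaces.linear sc (*) (S x)"
    and linear_S_left: "Vector_Spaces.linear sc (*) (\<lambda>x. S x y)"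
    and nondegenerate: "(\<And>y. S x y = 0) \<Longrightarrow> x = 0"
begin

lemmas S_scale_right = module_hom.scale[OF linear_S_right[THEN module_hom_linearI]]
  and S_diff_right = module_hom.diff[OF linear_S_right[THEN module_hom_linearI]]

lemmas S_add_left = module_hom.add[OF linear_S_left[THEN module_hom_linearI]]
  and S_scale_left = module_hom.scale[OF linear_S_left[THEN module_hom_linearI]]
  and S_diff_left = module_hom.diff[OF linear_S_left[THEN module_hom_linearI]]
  and S_neg_left = module_hom.neg[OF linear_S_left[THEN module_hom_linearI]]
  and S_zero_left = module_hom.zero[OF linear_S_left[THEN module_hom_linearI]]

lemma S_eqI: "(\<And>y. S a y = S b y) \<Longrightarrow> a = b"
  using nondegenerate[of "a - b"] by (simp add: S_diff_left)

lemma S_linear_combination: "(\<lambda>y. c * S a y + d * S b y) = S (sc c a + sc d b)"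
  by (simp add: fun_eq_iff S_add_left S_scale_left)

lemma coefficients_unique:
  assumes sums: "(\<Sum>e\<in>Bs. sc (u e) e) = (\<Sum>e\<in>Bs. sc (w e) e)" and "e \<in> Bs"
  shows "u e = w e"
proof (rule ccontr)
  assume "u e \<noteq> w e"
  moreover have "(\<Sum>e\<in>Bs. sc (u e - w e) e) = 0"
    using sums by (simp add: scale_left_diff_distrib sum_subtractf)
  ultimately have "dependent Bs"
    unfolding dependent_finite[OF finite_Basis] using \<open>e \<in> Bs\<close>
    by (intro exI[of _ "\<lambda>e. u e - w e"]) auto
  then show False
    using independent_Basis by simp
qed

lemma linear_functional_eq_on_Basis:
  assumes "Vector_Spaces.linear sc (*) f" "Vector_Spaces.linear sc (*) g"
    and "\<And>e. e \<in> Bs \<Longrightarrow> f e = g e"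
  shows "f = g"
proof
  fix x
  interpret vector_space_pair sc "(*) :: 'k \<Rightarrow> 'k \<Rightarrow> 'k"
    using assms(1) vector_space_axioms by (simp add: Vector_Spaces.linear_iff vector_space_pair_def)
  show "f x = g x"
    using linear_eq_on[OF assms(1,2), of x Bs] span_Basis assms(3) by simp
qed

lemma range_S_eq_dual_sp: "range S = dual_sp sc"
proof
  show "range S \<subseteq> dual_sp sc"
    using linear_S_right by (auto simp: dual_sp_def)
  show "dual_sp sc \<subseteq> range S"
  proof
    fix \<xi> assume \<xi>: "\<xi> \<in> dual_sp sc"
    \<comment> \<open>\<open>a \<mapsto> S a\<close> followed by the coordinate isomorphism \<open>g\<^sup>* \<cong> g\<close> of the basis\<close>
    define T where "T a = (\<Sum>e\<in>Bs. sc (S a e) e)" for a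
    have "Vector_Spaces.linear sc sc T"
      unfolding Vector_Spaces.linear_iff T_def
      by (simp add: vector_space_axioms S_add_left S_scale_left scale_left_distrib sum.distrib
          scale_sum_right)
    moreover have "inj T"
    proof (rule injI)
      fix a b assume "T a = T b"
      then have "S a e = S b e" if "e \<in> Bs" for e
        using coefficients_unique[of "S a" "S b"] that by (simp add: T_def)
      then have "S a = S b"
        by (intro linear_functional_eq_on_Basis linear_S_right)
      then show "a = b"
        by (intro S_eqI) simp
    qed
    ultimately have "surj T"
      by (rule linear_inj_imp_surj)
    then obtain a where "T a = (\<Sum>e\<in>Bs. sc (\<xi> e) e)"
      by (metis surjD)
    then have "S a e = \<xi> e" if "e \<in> Bs" for e
      using coefficients_unique[of "S a" \<xi>] that by (simp add: T_def)
    then have "S a = \<xi>"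
      using \<xi> by (intro linear_functional_eq_on_Basis linear_S_right) (simp_all add: dual_sp_def)
    then show "\<xi> \<in> range S"
      by blast
  qed
qed

lemma dual_spE:
  assumes "\<xi> \<in> dual_sp sc" obtains a where "\<xi> = S a"
  using assms range_S_eq_dual_sp by blast

lemma S_in_dual_sp: "S a \<in> dual_sp sc"
  using range_S_eq_dual_sp by blast

lemma I_S_S [simp]: "I_S S (S a) = a"
  unfolding I_S_def by (rule the_equality) (auto intro: S_eqI)

end

locale quadratic_lie_algebra = nondegenerate_form sc Bs S
  for sc :: "'k::field \<Rightarrow> 'v::ab_group_add \<Rightarrow> 'v" and Bs S +
  fixes br :: "'v \<Rightarrow> 'v \<Rightarrow> 'v"
  assumes lie_algebra: "lie_algebra sc br"
    and S_sym: "S x y = S y x"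
    and S_invariant: "S (br x y) z + S y (br x z) = 0"
begin

lemma linear_br_right: "Vector_Spaces.linear sc sc (br x)"
  and linear_br_left: "Vector_Spaces.linear sc sc (\<lambda>x. br x y)"
  and br_anti_commute: "br x y = - br y x"
  and jacobi: "br x (br y z) + br y (br z x) + br z (br x y) = 0"
  using lie_algebra unfolding lie_algebra_def by blast+

lemmas br_add_right = module_hom.add[OF linear_br_right[THEN module_hom_linearI]]
  and br_scale_right = module_hom.scale[OF linear_br_right[THEN module_hom_linearI]]
  and br_neg_right = module_hom.neg[OF linear_br_right[THEN module_hom_linearI]]

lemmas br_add_left = module_hom.add[OF linear_br_left[THEN module_hom_linearI]]
  and br_scale_left = module_hom.scale[OF linear_br_left[THEN module_hom_linearI]]

lemma S_br_right: "S a (br x y) = S (br a x) y"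
  using S_invariant[of x a y] br_anti_commute[of x a] by (simp add: S_neg_left eq_neg_iff_add_eq_0)

lemma br_br_left: "br (br a x) y - br (br a y) x = br a (br x y)"
proof -
  have j: "br a (br x y) = - (br x (br y a) + br y (br a x))"
    using jacobi[of a x y] by (metis add.assoc eq_neg_iff_add_eq_0)
  have "br (br a y) x = br x (br y a)"
    using br_anti_commute[of "br a y" x] br_anti_commute[of a y] by (simp add: br_neg_right)
  then show ?thesis
    using br_anti_commute[of "br a x" y] by (simp add: j algebra_simps)
qed

lemma ad_star_S: "ad_star br x (S a) = S (br x a)"
  using br_anti_commute[of a x] by (simp add: ad_star_def fun_eq_iff S_br_right S_neg_left)

end

locale quadratic_rota_baxter = quadratic_lie_algebra sc Bs S br
  for sc :: "'k::field \<Rightarrow> 'v::ab_group_add \<Rightarrow> 'v" and Bs S br +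
  fixes B :: "'v \<Rightarrow> 'v" and lam :: 'k
  assumes linear_B: "Vector_Spaces.linear sc sc B"
    and rota_baxter: "br (B x) (B y) = B (br (B x) y + br x (B y) + sc lam (br x y))"
    and S_B: "S x (B y) + S (B x) y + lam * S x y = 0"
    and lam_nonzero: "lam \<noteq> 0"
begin

lemmas B_add = module_hom.add[OF linear_B[THEN module_hom_linearI]]
  and B_scale = module_hom.scale[OF linear_B[THEN module_hom_linearI]]
  and B_diff = module_hom.diff[OF linear_B[THEN module_hom_linearI]]

text \<open>\<open>Rplus\<close>, \<open>Rminus\<close> and \<open>r_br\<close> are \<open>r\<^sub>+\<close>, \<open>r\<^sub>-\<close> and the bracket of \<open>g\<^sup>*\<^sub>r\<close>
  transported to \<open>g\<close> along \<open>S\<close>; \<open>br_B\<close> is the descendent bracket \<open>[-,-]\<^sub>B\<close>.\<close>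

definition br_B :: "'v \<Rightarrow> 'v \<Rightarrow> 'v"
  where "br_B x y = br (B x) y + br x (B y) + sc lam (br x y)"

definition r_br :: "'v \<Rightarrow> 'v \<Rightarrow> 'v"
  where "r_br x y = sc (1 / lam) (br_B x y)"

definition Rplus :: "'v \<Rightarrow> 'v"
  where "Rplus x = sc (1 / lam) (B x + sc lam x)"

definition Rminus :: "'v \<Rightarrow> 'v"
  where "Rminus x = sc (1 / lam) (B x)"

lemma Rplus_diff: "Rplus (x - y) = Rplus x - Rplus y"
  by (simp add: Rplus_def B_diff scale_right_diff_distrib algebra_simps)

lemma B_br_B: "B (br_B x y) = br (B x) (B y)"
  by (simp add: br_B_def rota_baxter)

lemma br_B_anti_commute: "br_B x y = - br_B y x"
  using br_anti_commute[of x y] br_anti_commute[of "B x" y] br_anti_commute[of x "B y"]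
  by (simp add: br_B_def scale_minus_right)

lemma br_B_add_left: "br_B (x + x') y = br_B x y + br_B x' y"
  by (simp add: br_B_def B_add br_add_left br_add_right scale_right_distrib algebra_simps)

lemma br_B_scale_left: "br_B (sc c x) y = sc c (br_B x y)"
  by (simp add: br_B_def B_scale br_scale_left br_scale_right scale_right_distrib mult.commute)

lemma br_B_add_right: "br_B x (y + y') = br_B x y + br_B x y'"
  by (simp add: br_B_def B_add br_add_left br_add_right scale_right_distrib algebra_simps)

lemma br_B_scale_right: "br_B x (sc c y) = sc c (br_B x y)"
  by (simp add: br_B_def B_scale br_scale_left br_scale_right scale_right_distrib mult.commute)

lemma br_B_jacobi: "br_B a (br_B b c) + br_B b (br_B c a) + br_B c (br_B a b) = 0"
proof -
  let ?J = "\<lambda>x y z. br x (br y z) + br y (br z x) + br z (br x y)"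
  have "br_B a (br_B b c) + br_B b (br_B c a) + br_B c (br_B a b)
      = (?J (B a) (B b) c + ?J (B b) (B c) a + ?J (B c) (B a) b)
      + sc lam (?J (B a) b c + ?J (B b) c a + ?J (B c) a b) + sc (lam * lam) (?J a b c)"
    unfolding br_B_def[of _ "br_B _ _"] B_br_B
    by (simp add: br_B_def br_add_right br_scale_right scale_right_distrib ac_simps)
  then show ?thesis
    by (simp add: jacobi)
qed

lemma r_br_anti_commute: "r_br x y = - r_br y x"
  by (simp add: r_br_def br_B_anti_commute[of x y] scale_minus_right)

lemma r_br_linear_combination_left:
  "r_br (sc c x + sc d x') y = sc c (r_br x y) + sc d (r_br x' y)"
  by (simp add: r_br_def br_B_add_left br_B_scale_left scale_right_distrib mult.commute)

lemma r_br_linear_combination_right: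
  "r_br x (sc c y + sc d y') = sc c (r_br x y) + sc d (r_br x y')"
  by (simp add: r_br_def br_B_add_right br_B_scale_right scale_right_distrib mult.commute)

lemma r_br_jacobi: "r_br a (r_br b c) + r_br b (r_br c a) + r_br c (r_br a b) = 0"
proof -
  have "r_br a (r_br b c) + r_br b (r_br c a) + r_br c (r_br a b)
      = sc (1 / lam) (sc (1 / lam) (br_B a (br_B b c) + br_B b (br_B c a) + br_B c (br_B a b)))"
    by (simp add: r_br_def br_B_scale_right scale_right_distrib)
  then show ?thesis
    by (simp add: br_B_jacobi)
qed

lemma r_br_eq: "r_br x y = br (Rplus x) y - br (Rminus y) x"
  using br_anti_commute[of "B y" x]
  by (simp add: r_br_def br_B_def Rplus_def Rminus_def br_add_left br_scale_left
      scale_right_distrib lam_nonzero)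

lemma S_Rplus: "S (Rplus x) y = - S x (Rminus y)"
proof -
  have "S (B x) y + lam * S x y = - S x (B y)"
    using S_B[of x y] by (simp add: eq_neg_iff_add_eq_0 ac_simps)
  then show ?thesis
    by (simp add: Rplus_def Rminus_def S_add_left S_scale_left S_scale_right)
qed

lemma r_plus_S: "r_plus sc B S lam (S x) = Rplus x"
  by (simp add: r_plus_def Rplus_def)

lemma r_minus_S: "r_minus sc B S lam (S y) = Rminus y"
  unfolding r_minus_def
proof (rule the_equality)
  show "\<forall>\<zeta>\<in>dual_sp sc. \<zeta> (Rminus y) = - S y (r_plus sc B S lam \<zeta>)"
    using S_Rplus by (auto elim!: dual_spE simp: r_plus_S S_sym[of y])
next
  fix x assume x: "\<forall>\<zeta>\<in>dual_sp sc. \<zeta> x = - S y (r_plus sc B S lam \<zeta>)"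
  have "S z x = - S y (Rplus z)" for z
    using x[rule_format, OF S_in_dual_sp[of z]] by (simp add: r_plus_S)
  then have "S z x = S z (Rminus y)" for z
    using S_Rplus[of z y] S_sym[of y "Rplus z"] by simp
  then show "x = Rminus y"
    by (intro S_eqI) (simp add: S_sym[of x] S_sym[of "Rminus y"])
qed

lemma r_bracket_S: "r_bracket sc br B S lam (S x) (S y) = S (r_br x y)"
  by (simp add: r_bracket_def ad_star_S r_plus_S r_minus_S r_br_eq S_diff_left fun_eq_iff)

lemma S_r_br: "S (r_br x y) z = S (Rplus (br x z)) y + S (Rplus x) (br y z)"
proof -
  have "S (br (Rminus y) x) z = - S (Rplus (br x z)) y"
    using S_br_right[of "Rminus y" x z] S_sym[of "br x z" "Rminus y"] S_Rplus[of "br x z" y] by simp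
  then show ?thesis
    by (simp add: r_br_eq S_diff_left S_br_right[symmetric])
qed

lemma r_br_cocycle: "S (r_br a b) (br x y) =
    S (r_br (br a x) b) y + S (r_br a (br b x)) y - S (r_br (br a y) b) x - S (r_br a (br b y)) x"
proof -
  have "S (Rplus (br a (br x y))) b = S (Rplus (br (br a x) y)) b - S (Rplus (br (br a y) x)) b"
    by (simp flip: br_br_left add: Rplus_diff S_diff_left)
  moreover have "S (Rplus a) (br b (br x y)) = S (Rplus a) (br (br b x) y) - S (Rplus a) (br (br b y) x)"
    by (simp flip: br_br_left add: S_diff_right)
  ultimately show ?thesis
    by (simp add: S_r_br algebra_simps)
qed

lemma dual_lie_algebra_r_bracket: "dual_lie_algebra sc (r_bracket sc br B S lam)"
  unfolding dual_lie_algebra_def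
proof (intro conjI)
  have anti_commute: "S (r_br a b) = (\<lambda>v. - S (r_br b a) v)" for a b
    by (simp add: fun_eq_iff r_br_anti_commute[of a b] S_neg_left)
  show "\<forall>\<xi>\<in>dual_sp sc. \<forall>\<eta>\<in>dual_sp sc.
      r_bracket sc br B S lam \<xi> \<eta> = (\<lambda>v. - r_bracket sc br B S lam \<eta> \<xi> v)"
    by (auto elim!: dual_spE simp only: r_bracket_S intro: anti_commute)
  have "S (r_br a (r_br b c)) v + S (r_br b (r_br c a)) v + S (r_br c (r_br a b)) v = 0"
    for a b c v
    using r_br_jacobi[of a b c] by (simp add: S_zero_left flip: S_add_left)
  then show "\<forall>\<xi>\<in>dual_sp sc. \<forall>\<eta>\<in>dual_sp sc. \<forall>\<zeta>\<in>dual_sp sc.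
      (\<lambda>v. r_bracket sc br B S lam \<xi> (r_bracket sc br B S lam \<eta> \<zeta>) v
        + r_bracket sc br B S lam \<eta> (r_bracket sc br B S lam \<zeta> \<xi>) v
        + r_bracket sc br B S lam \<zeta> (r_bracket sc br B S lam \<xi> \<eta>) v) = (\<lambda>v. 0)"
    by (auto elim!: dual_spE simp: r_bracket_S)
qed (auto elim!: dual_spE simp: r_bracket_S S_in_dual_sp S_linear_combination
    r_br_linear_combination_left r_br_linear_combination_right)

lemma lie_bialgebra_r_bracket: "lie_bialgebra sc br (r_bracket sc br B S lam)"
proof -
  have "(\<lambda>z. S a (br x z)) = S (br a x)" for a x
    by (simp add: fun_eq_iff S_br_right)
  then show ?thesis
    unfolding lie_bialgebra_def
    by (auto elim!: dual_spE simp: lie_algebra dual_lie_algebra_r_bracket r_bracket_S r_br_cocycle)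
qed

end

locale quadratic_ENL_rota_baxter = quadratic_rota_baxter sc Bs S br B lam
  for sc :: "'k::field \<Rightarrow> 'v::ab_group_add \<Rightarrow> 'v" and Bs S br B lam +
  fixes E :: "'v \<Rightarrow> 'v"
  assumes linear_E: "Vector_Spaces.linear sc sc E"
    and E_br: "E (br x y) = br x (E y)"
    and S_E: "S (E x) y = S x (E y)"
    and E_B: "E (B x) = B (E x)"
begin

lemmas E_add = module_hom.add[OF linear_E[THEN module_hom_linearI]]
  and E_scale = module_hom.scale[OF linear_E[THEN module_hom_linearI]]
  and E_neg = module_hom.neg[OF linear_E[THEN module_hom_linearI]]

lemma E_br_left: "E (br x y) = br (E x) y"
  using br_anti_commute[of x y] br_anti_commute[of y "E x"] by (simp add: E_neg E_br)

lemma E_r_br_right: "E (r_br x y) = r_br x (E y)"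
  by (simp add: r_br_def br_B_def E_scale E_add E_br E_B)

lemma E_r_br_left: "E (r_br x y) = r_br (E x) y"
  by (simp add: r_br_def br_B_def E_scale E_add E_br_left E_B)

lemma S_comp_E: "S x \<circ> E = S (E x)"
  by (simp add: fun_eq_iff S_E S_sym[of x])

lemma enl_bialgebra_r_bracket: "enl_bialgebra sc br (r_bracket sc br B S lam) E"
  unfolding enl_bialgebra_def
  by (auto elim!: dual_spE simp: lie_bialgebra_r_bracket linear_E E_br r_bracket_S S_comp_E
      E_r_br_right)

lemma r_bracket_comp_E_left:
  assumes "\<xi> \<in> dual_sp sc" "\<eta> \<in> dual_sp sc"
  shows "r_bracket sc br B S lam \<xi> \<eta> \<circ> E = r_bracket sc br B S lam (\<xi> \<circ> E) \<eta>"
  using assms by (auto elim!: dual_spE simp: r_bracket_S S_comp_E E_r_br_left)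

end

lemma quadratic_ENL_RB_imp_quadratic_ENL_rota_baxter:
  assumes "finite_dimensional_vector_space sc Bs" and "quadratic_ENL_RB sc br B S E lam"
  shows "quadratic_ENL_rota_baxter sc Bs S br B lam E"
  using assms
  unfolding quadratic_ENL_RB_def quadratic_RB_lie_def quadratic_ENL_rota_baxter_def
    quadratic_ENL_rota_baxter_axioms_def quadratic_rota_baxter_def quadratic_rota_baxter_axioms_def
    quadratic_lie_algebra_def quadratic_lie_algebra_axioms_def nondegenerate_form_def
    nondegenerate_form_axioms_def
  by (auto simp: fun_eq_iff)

theorem theorem4p3:
  fixes sc :: "'k::field_char_0 \<Rightarrow> 'v::ab_group_add \<Rightarrow> 'v"
    and br :: "'v \<Rightarrow> 'v \<Rightarrow> 'v"
    and B E :: "'v \<Rightarrow> 'v"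
    and S :: "'v \<Rightarrow> 'v \<Rightarrow> 'k"
    and lam :: 'k
  assumes "alg_closed_field TYPE('k)"
    and "fd_space sc"
    and "quadratic_ENL_RB sc br B S E lam"
  shows "enl_bialgebra sc br (r_bracket sc br B S lam) E
    \<and> (\<forall>\<xi>\<in>dual_sp sc. \<forall>\<eta>\<in>dual_sp sc.
         r_bracket sc br B S lam \<xi> \<eta> \<circ> E = r_bracket sc br B S lam (\<xi> \<circ> E) \<eta>)"
proof -
  obtain Bs where "finite_dimensional_vector_space sc Bs"
    using assms(2) unfolding fd_space_def by blast
  then interpret quadratic_ENL_rota_baxter sc Bs S br B lam E
    using assms(3) by (rule quadratic_ENL_RB_imp_quadratic_ENL_rota_baxter)
  show ?thesis
    using enl_bialgebra_r_bracket r_bracket_comp_E_left by blast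
qed

end
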